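(* Let $\mathcal X$ be a finite set, $f:\mathcal X\to\mathbb R$ with $\min_{x\in\mathcal X}f(x)=0$, $\mu$ a probability measure on $\mathcal X$, $\mathcal N(x)\subseteq\mathcal X$ neighborhoods, $\mathcal Df$ a fixed deterministic choice $\mathcal Df(x)\in\arg\min_{y\in\mathcal N(x)}f(y)$, and $\epsilon\in f(\mathcal X)$ with $\epsilon<\max_{\mathcal X}f$. Let $q(\cdot)$, $p_2(\cdot)$, $a$ be the quantities defined in the context for the algorithm $\mathcal G_1=\mathcal G_{1,\mathcal X\setminus\mathcal F(\mathcal Df)}$. If $$\sum_{j=0}^a\frac{p_2(j)}{(1-q(0))^{j+1}}\ge1,$$ then $$\sup_{p\in[0,1)}\xi_{\rm crit}(\mathcal G_{p,\mathcal X})\ \ge\ \xi_{\rm crit}(\mathcal G_1),$$ i.e. some algorithm of the class $\mathcal A_2=\{\mathcal G_{p,\mathcal X}:p\in[0,1)\}$ has asymptotic convergence exponent at least that of $\mathcal G_1$.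
   Context: Setting. For $p\in[0,1]$ and $A\subseteq\mathcal X$, the algorithm $\mathcal G_{p,A}$ is the Markov chain on $\mathcal X$ with generator $[\mathcal G\phi](x)=p\mathbf 1_A(x)\phi(\mathcal Df(x))+(1-p\mathbf 1_A(x))\mathbf E^\mu[\phi]-\phi(x)$: from $x\in A$ it moves to $\mathcal Df(x)$ with probability $p$ and otherwise jumps to a $\mu$-distributed point; from $x\notin A$ it jumps to a $\mu$-distributed point. Write $\mathcal D^kf$ for the $k$-fold iterate of $\mathcal Df$. Let $\mathcal L(\epsilon)=f^{-1}([0,\epsilon])$, $B(\epsilon)=\mathcal X\setminus\mathcal L(\epsilon)$, $\mathcal W(S)=\{x:\lim_{k\to\infty}\mathcal D^kf(x)\in S\}$, $\Gamma(\epsilon)=\mathcal X\setminus\mathcal W(\mathcal L(\epsilon))$, $\mathcal F(\mathcal Df)=\{x:\mathcal Df(x)=x\}$. For a given $A$: $d(x)=\min\{k\ge0:\mathcal D^kf(x)\in\mathcal F(\mathcal Df)\cup\mathcal L(\epsilon)\cup(\mathcal X\setminus A)\}$; $q(j)=\mu(\mathcal W(\mathcal L(\epsilon))\cap d^{-1}(j))$; $p_1(j)=\mu(\Gamma(\epsilon)\cap d^{-1}(j)\cap(\mathcal D^jf)^{-1}(A))$; $p_2(j)=\mu(\Gamma(\epsilon)\cap d^{-1}(j)\cap(\mathcal D^jf)^{-1}(\mathcal X\setminus A))$; $a=\max\{j:p_1(j)\vee p_2(j)>0\}$, $b=\max\{j:q(j)>0\}$; $\mathcal X_3=\{x:\mathcal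 D^{d(x)}f(x)\in A\cap B(\epsilon)\}$. Define $$Q(\xi,p)=1-\frac{(1-p)e^\xi}{1-pe^\xi}\sum_{j=0}^a p_1(j)-e^\xi\sum_{j=0}^a p_2(j)p^je^{j\xi}-(1-p)e^\xi\sum_{j=0}^{a\vee b}(q(j)+p_2(j))\sum_{i=0}^{j-1}p^ie^{i\xi},$$ with empty sums equal to $0$. It is known that if $\mathcal X_3=\emptyset$ then $Q(\cdot,p)$ has a unique positive root for every $p\in[0,1]$, and if $\mathcal X_3\neq\emptyset$ then $Q(\cdot,p)$ has a unique root in $(0,-\log p)$ for every $p\in[0,1)$ (with $-\log0=\infty$); this root is the critical exponent $\xi_{\rm crit}(\mathcal G_{p,A})$. In particular $\xi_{\rm crit}(\mathcal G_1)$ is the positive root of $1-e^\xi\sum_{j=0}^ap_2(j)e^{j\xi}=0$ (quantities for $A=\mathcal X\setminus\mathcal F(\mathcal Df)$), and for $p\in[0,1)$, $\xi_{\rm crit}(\mathcal G_{p,\mathcal X})$ is the root in $(0,-\log p)$ of $1-e^\xi+(1-p)e^\xi\sum_{j=0}^bq(j)p^je^{j\xi}=0$ (quantities for $A=\mathcal X$). For both choices of $A$, $d(x)=\min\{k\ge0:\mathcal D^kf(x)\in\mathcal F(\mathcal Df)\cup\mathcal L(\epsilon)\}$, so $q(\cdot)$ and $b$ are the same. *)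

theory Defs
  imports "HOL-Probability.Probability"
begin

text \<open>The finite state space X is the finite type 'a; mu is a pmf on it;
  D is the deterministic map Df; the k-fold iterate is D^^k.\<close>

definition Lset :: "('a \<Rightarrow> real) \<Rightarrow> real \<Rightarrow> 'a set" where
  "Lset f eps = {x. 0 \<le> f x \<and> f x \<le> eps}"

definition Bset :: "('a \<Rightarrow> real) \<Rightarrow> real \<Rightarrow> 'a set" where
  "Bset f eps = - Lset f eps"

text \<open>Limit of the iterates in the finite (discrete) set: eventually constant.\<close>
definition iter_lim :: "('a \<Rightarrow> 'a) \<Rightarrow> 'a \<Rightarrow> 'a \<Rightarrow> bool" where
  "iter_lim D x y = (\<exists>K. \<forall>k\<ge>K. (D ^^ k) x = y)"

definition Wset :: "('a \<Rightarrow> 'a) \<Rightarrow> 'a set \<Rightarrow> 'a set" where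
  "Wset D S = {x. \<exists>y\<in>S. iter_lim D x y}"

definition Gamma :: "('a \<Rightarrow> 'a) \<Rightarrow> ('a \<Rightarrow> real) \<Rightarrow> real \<Rightarrow> 'a set" where
  "Gamma D f eps = - Wset D (Lset f eps)"

definition Fixset :: "('a \<Rightarrow> 'a) \<Rightarrow> 'a set" where
  "Fixset D = {x. D x = x}"

definition stopset :: "('a \<Rightarrow> 'a) \<Rightarrow> ('a \<Rightarrow> real) \<Rightarrow> real \<Rightarrow> 'a set \<Rightarrow> 'a set" where
  "stopset D f eps A = Fixset D \<union> Lset f eps \<union> (- A)"

text \<open>dlev D f eps A j is the level set d^{-1}(j) of the hitting time d.\<close>
definition dlev :: "('a \<Rightarrow> 'a) \<Rightarrow> ('a \<Rightarrow> real) \<Rightarrow> real \<Rightarrow> 'a set \<Rightarrow> nat \<Rightarrow> 'a set" where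
  "dlev D f eps A j = {x. (D ^^ j) x \<in> stopset D f eps A \<and>
                          (\<forall>k<j. (D ^^ k) x \<notin> stopset D f eps A)}"

definition qf :: "'a pmf \<Rightarrow> ('a \<Rightarrow> 'a) \<Rightarrow> ('a \<Rightarrow> real) \<Rightarrow> real \<Rightarrow> 'a set \<Rightarrow> nat \<Rightarrow> real" where
  "qf mu D f eps A j = measure_pmf.prob mu (Wset D (Lset f eps) \<inter> dlev D f eps A j)"

definition p1f :: "'a pmf \<Rightarrow> ('a \<Rightarrow> 'a) \<Rightarrow> ('a \<Rightarrow> real) \<Rightarrow> real \<Rightarrow> 'a set \<Rightarrow> nat \<Rightarrow> real" where
  "p1f mu D f eps A j = measure_pmf.prob mu
     (Gamma D f eps \<inter> dlev D f eps A j \<inter> {x. (D ^^ j) x \<in> A})"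

definition p2f :: "'a pmf \<Rightarrow> ('a \<Rightarrow> 'a) \<Rightarrow> ('a \<Rightarrow> real) \<Rightarrow> real \<Rightarrow> 'a set \<Rightarrow> nat \<Rightarrow> real" where
  "p2f mu D f eps A j = measure_pmf.prob mu
     (Gamma D f eps \<inter> dlev D f eps A j \<inter> {x. (D ^^ j) x \<notin> A})"

definition a_idx :: "'a pmf \<Rightarrow> ('a \<Rightarrow> 'a) \<Rightarrow> ('a \<Rightarrow> real) \<Rightarrow> real \<Rightarrow> 'a set \<Rightarrow> nat" where
  "a_idx mu D f eps A = Max {j. p1f mu D f eps A j > 0 \<or> p2f mu D f eps A j > 0}"

definition b_idx :: "'a pmf \<Rightarrow> ('a \<Rightarrow> 'a) \<Rightarrow> ('a \<Rightarrow> real) \<Rightarrow> real \<Rightarrow> 'a set \<Rightarrow> nat" where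
  "b_idx mu D f eps A = Max {j. qf mu D f eps A j > 0}"

definition X3 :: "('a \<Rightarrow> 'a) \<Rightarrow> ('a \<Rightarrow> real) \<Rightarrow> real \<Rightarrow> 'a set \<Rightarrow> 'a set" where
  "X3 D f eps A = {x. \<exists>j. x \<in> dlev D f eps A j \<and> (D ^^ j) x \<in> A \<inter> Bset f eps}"

definition Qfun :: "'a pmf \<Rightarrow> ('a \<Rightarrow> 'a) \<Rightarrow> ('a \<Rightarrow> real) \<Rightarrow> real \<Rightarrow> 'a set \<Rightarrow> real \<Rightarrow> real \<Rightarrow> real" where
  "Qfun mu D f eps A \<xi> p =
     (let a = a_idx mu D f eps A; b = b_idx mu D f eps A;
          q = qf mu D f eps A; p1 = p1f mu D f eps A; p2 = p2f mu D f eps A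
      in 1 - (1 - p) * exp \<xi> / (1 - p * exp \<xi>) * (\<Sum>j=0..a. p1 j)
           - exp \<xi> * (\<Sum>j=0..a. p2 j * p ^ j * exp (real j * \<xi>))
           - (1 - p) * exp \<xi> * (\<Sum>j=0..max a b. (q j + p2 j) *
                                   (\<Sum>i<j. p ^ i * exp (real i * \<xi>))))"

text \<open>Critical exponent of G_{p,A}: the unique positive root of Q(.,p) if X3 is empty,
  otherwise the unique root in (0, -log p) (with -log 0 = infinity).\<close>
definition xi_crit :: "'a pmf \<Rightarrow> ('a \<Rightarrow> 'a) \<Rightarrow> ('a \<Rightarrow> real) \<Rightarrow> real \<Rightarrow> 'a set \<Rightarrow> real \<Rightarrow> real" where
  "xi_crit mu D f eps A p =
     (if X3 D f eps A = {}
      then (THE \<xi>. 0 < \<xi> \<and> Qfun mu D f eps A \<xi> p = 0)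
      else (THE \<xi>. 0 < \<xi> \<and> (p = 0 \<or> \<xi> < - ln p) \<and> Qfun mu D f eps A \<xi> p = 0))"

end

theory Submission
  imports Defs
begin

(* For p = 0 the chain G_{p,X} never follows Df, so Q(xi,0) = 1 - e^xi K for a constant K and
   xi_crit(G_{0,X}) = -ln K; disjointness of the level sets of d gives K <= 1 - q(0).
   The critical exponent of G_1 is the positive root of the strictly increasing function
   G(xi) = e^xi sum_j p2(j) e^(j xi). Since G(0) <= K and, by the hypothesis,
   G(-ln K) = sum_j p2(j) / K^(j+1) >= sum_j p2(j) / (1 - q(0))^(j+1) >= 1,
   that root lies in (0, -ln K]. *)

lemma exp_poly_strict_mono:
  fixes c :: "nat \<Rightarrow> real"
  assumes nonneg: "\<And>j. 0 \<le> c j" and pos: "0 < (\<Sum>j=0..n. c j)"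
  shows "strict_mono (\<lambda>\<xi>. exp \<xi> * (\<Sum>j=0..n. c j * exp (real j * \<xi>)))"
proof (rule strict_monoI)
  fix x y :: real assume "x < y"
  obtain k where k: "k \<in> {0..n}" "0 < c k"
    using pos nonneg sum_nonpos[of "{0..n}" c] by (meson not_le)
  have shift: "exp \<xi> * (\<Sum>j=0..n. c j * exp (real j * \<xi>))
      = (\<Sum>j=0..n. c j * exp (real (Suc j) * \<xi>))" for \<xi> :: real
    unfolding sum_distrib_left by (rule sum.cong) (auto simp: exp_add[symmetric] algebra_simps)
  have "(\<Sum>j=0..n. c j * exp (real (Suc j) * x)) < (\<Sum>j=0..n. c j * exp (real (Suc j) * y))"
  proof (rule sum_strict_mono_ex1)
    show "\<forall>j\<in>{0..n}. c j * exp (real (Suc j) * x) \<le> c j * exp (real (Suc j) * y)"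
      using \<open>x < y\<close> nonneg by (auto intro!: mult_left_mono)
    show "\<exists>j\<in>{0..n}. c j * exp (real (Suc j) * x) < c j * exp (real (Suc j) * y)"
      using \<open>x < y\<close> k by (intro bexI[of _ k]) auto
  qed simp
  then show "exp x * (\<Sum>j=0..n. c j * exp (real j * x))
      < exp y * (\<Sum>j=0..n. c j * exp (real j * y))"
    unfolding shift .
qed

lemma exp_poly_at_minus_ln:
  fixes c :: "nat \<Rightarrow> real"
  assumes "0 < t"
  shows "exp (- ln t) * (\<Sum>j=0..n. c j * exp (real j * - ln t))
    = (\<Sum>j=0..n. c j / t ^ (j + 1))"
proof -
  have "exp (real j * - ln t) = 1 / t ^ j" for j
    using assms by (simp add: exp_of_nat_mult exp_minus inverse_eq_divide power_one_over)
  then show ?thesis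
    using assms by (simp add: exp_minus sum_distrib_left field_simps)
qed

lemma exp_poly_root_le:
  fixes c :: "nat \<Rightarrow> real" and n :: nat and y :: real
  defines "g \<equiv> \<lambda>\<xi>. exp \<xi> * (\<Sum>j=0..n. c j * exp (real j * \<xi>))"
  assumes nonneg: "\<And>j. 0 \<le> c j" and pos: "0 < (\<Sum>j=0..n. c j)"
    and below: "(\<Sum>j=0..n. c j) < 1" and "0 \<le> y" and above: "1 \<le> g y"
  shows "(THE \<xi>. 0 < \<xi> \<and> g \<xi> = 1) \<le> y"
proof -
  have g0: "g 0 = (\<Sum>j=0..n. c j)" unfolding g_def by simp
  have "continuous_on {0..y} g" unfolding g_def by (intro continuous_intros)
  then obtain x where x: "0 \<le> x" "x \<le> y" "g x = 1"
    using IVT'[of g 0 1 y] g0 below above \<open>0 \<le> y\<close> by force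
  have mono: "strict_mono g"
    unfolding g_def using pos by (rule exp_poly_strict_mono[OF nonneg])
  have "x \<noteq> 0" using x g0 below by auto
  have "(THE \<xi>. 0 < \<xi> \<and> g \<xi> = 1) = x"
  proof (rule the_equality)
    show "0 < x \<and> g x = 1" using x \<open>x \<noteq> 0\<close> by simp
    show "\<xi> = x" if "0 < \<xi> \<and> g \<xi> = 1" for \<xi>
      using that x strict_mono_eq[OF mono] by metis
  qed
  then show ?thesis using x by simp
qed

lemma the_exp_mult_root:
  fixes k :: real
  assumes "0 < k" "k < 1"
  shows "(THE \<xi>. 0 < \<xi> \<and> exp \<xi> * k = 1) = - ln k"
proof (rule the_equality)
  show "0 < - ln k \<and> exp (- ln k) * k = 1"
    using assms by (simp add: exp_minus)
  show "\<xi> = - ln k" if "0 < \<xi> \<and> exp \<xi> * k = 1" for \<xi>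
  proof -
    have "exp \<xi> = exp (- ln k)"
      using that assms by (simp add: exp_minus field_simps)
    then show ?thesis by simp
  qed
qed

lemma exp_poly_root_le_log_root:
  fixes c :: "nat \<Rightarrow> real" and n :: nat and k q :: real
  assumes nonneg: "\<And>j. 0 \<le> c j" and sum_le: "(\<Sum>j=0..n. c j) \<le> k"
    and k_le: "k \<le> 1 - q" and "0 \<le> q"
    and hyp: "1 \<le> (\<Sum>j=0..n. c j / (1 - q) ^ (j + 1))"
  shows "(THE \<xi>. 0 < \<xi> \<and> exp \<xi> * (\<Sum>j=0..n. c j * exp (real j * \<xi>)) = 1)
           \<le> (THE \<xi>. 0 < \<xi> \<and> exp \<xi> * k = 1)"
proof -
  let ?g = "\<lambda>\<xi>. exp \<xi> * (\<Sum>j=0..n. c j * exp (real j * \<xi>))"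
  have pos: "0 < (\<Sum>j=0..n. c j)"
  proof (rule ccontr)
    assume "\<not> 0 < (\<Sum>j=0..n. c j)"
    then have "\<forall>j\<in>{0..n}. c j = 0"
      using nonneg sum_nonneg_eq_0_iff[of "{0..n}" c] by (simp add: sum_nonneg order.antisym)
    then show False using hyp by simp
  qed
  show ?thesis
  proof (cases "k < 1")
    case True
    have "0 < k" using pos sum_le by linarith
    have "1 \<le> (\<Sum>j=0..n. c j / (1 - q) ^ (j + 1))" by (rule hyp)
    also have "\<dots> \<le> (\<Sum>j=0..n. c j / k ^ (j + 1))"
      using nonneg \<open>0 < k\<close> k_le
      by (intro sum_mono divide_left_mono power_mono mult_pos_pos zero_less_power) auto
    also have "\<dots> = ?g (- ln k)"
      using \<open>0 < k\<close> by (rule exp_poly_at_minus_ln[symmetric])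
    finally have "(THE \<xi>. 0 < \<xi> \<and> ?g \<xi> = 1) \<le> - ln k"
      using nonneg pos sum_le True \<open>0 < k\<close> by (intro exp_poly_root_le) auto
    then show ?thesis using the_exp_mult_root[OF \<open>0 < k\<close> True] by simp
  next
    case False
    then have "k = 1" "q = 0" using k_le \<open>0 \<le> q\<close> by linarith+
    then have "(\<Sum>j=0..n. c j) = 1" using hyp sum_le by simp
    then have no_root: "\<not> (0 < \<xi> \<and> ?g \<xi> = 1)" for \<xi>
      using strict_monoD[OF exp_poly_strict_mono[OF nonneg pos], of 0 \<xi>] by auto
    text \<open>Degenerate case: neither equation has a positive root, so both sides are the
      same unspecified value of THE.\<close>
    have "(\<lambda>\<xi>. 0 < \<xi> \<and> ?g \<xi> = 1) = (\<lambda>\<xi>. 0 < \<xi> \<and> exp \<xi> * k = 1)"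
      using no_root \<open>k = 1\<close> by (auto simp: fun_eq_iff)
    then show ?thesis by simp
  qed
qed

lemma disjoint_family_Int_dlev: "disjoint_family (\<lambda>j. S \<inter> dlev D f eps A j)"
  unfolding disjoint_family_on_def
proof (intro ballI impI)
  fix i j :: nat assume "i \<noteq> j"
  then consider "i < j" | "j < i" by linarith
  then show "S \<inter> dlev D f eps A i \<inter> (S \<inter> dlev D f eps A j) = {}"
    unfolding dlev_def by cases auto
qed

lemma dlev_eq_UNIV:
  assumes "- A \<subseteq> Fixset D"
  shows "dlev D f eps A = dlev D f eps UNIV"
proof -
  have "stopset D f eps A = stopset D f eps UNIV"
    using assms unfolding stopset_def by auto
  then show ?thesis unfolding dlev_def by simp
qed

lemma qf_eq_UNIV:
  assumes "- A \<subseteq> Fixset D"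
  shows "qf mu D f eps A = qf mu D f eps UNIV"
  by (simp add: qf_def dlev_eq_UNIV[OF assms] fun_eq_iff)

lemma p2f_UNIV: "p2f mu D f eps UNIV j = 0"
  by (simp add: p2f_def)

lemma p1f_UNIV_eq_add:
  assumes "- A \<subseteq> Fixset D"
  shows "p1f mu D f eps UNIV j = p1f mu D f eps A j + p2f mu D f eps A j"
proof -
  let ?G = "Gamma D f eps \<inter> dlev D f eps A j"
  have "p1f mu D f eps A j + p2f mu D f eps A j
      = measure_pmf.prob mu (?G \<inter> {x. (D ^^ j) x \<in> A} \<union> ?G \<inter> {x. (D ^^ j) x \<notin> A})"
    unfolding p1f_def p2f_def by (subst measure_pmf.finite_measure_Union) auto
  also have "?G \<inter> {x. (D ^^ j) x \<in> A} \<union> ?G \<inter> {x. (D ^^ j) x \<notin> A} = ?G"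
    by auto
  also have "measure_pmf.prob mu ?G = p1f mu D f eps UNIV j"
    by (simp add: p1f_def dlev_eq_UNIV[OF assms])
  finally show ?thesis ..
qed

lemma a_idx_eq_UNIV:
  assumes "- A \<subseteq> Fixset D"
  shows "a_idx mu D f eps UNIV = a_idx mu D f eps A"
proof -
  have "p1f mu D f eps A j \<ge> 0" "p2f mu D f eps A j \<ge> 0" for j
    by (simp_all add: p1f_def p2f_def)
  then have "{j. p1f mu D f eps UNIV j > 0 \<or> p2f mu D f eps UNIV j > 0}
           = {j. p1f mu D f eps A j > 0 \<or> p2f mu D f eps A j > 0}"
    by (auto simp: p1f_UNIV_eq_add[OF assms] p2f_UNIV add_pos_nonneg add_nonneg_pos)
  then show ?thesis unfolding a_idx_def by simp
qed

lemma X3_compl_Fixset: "X3 D f eps (- Fixset D) = {}"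
  unfolding X3_def dlev_def stopset_def Bset_def by auto

lemma sum_p1f_qf_UNIV_le_one:
  fixes I J :: "nat set"
  assumes "finite I" "finite J"
  shows "(\<Sum>j\<in>I. p1f mu D f eps UNIV j) + (\<Sum>j\<in>J. qf mu D f eps UNIV j) \<le> 1"
proof -
  let ?G = "\<lambda>j. Gamma D f eps \<inter> dlev D f eps UNIV j"
  let ?W = "\<lambda>j. Wset D (Lset f eps) \<inter> dlev D f eps UNIV j"
  have disj: "disjoint_family_on (\<lambda>j. S \<inter> dlev D f eps UNIV j) K" for S :: "'a set" and K
    by (rule disjoint_family_on_mono[OF subset_UNIV disjoint_family_Int_dlev])
  have "(\<Sum>j\<in>I. p1f mu D f eps UNIV j) = (\<Sum>j\<in>I. measure_pmf.prob mu (?G j))"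
    by (simp add: p1f_def)
  also have "\<dots> = measure_pmf.prob mu (\<Union>j\<in>I. ?G j)"
    by (rule measure_pmf.finite_measure_finite_Union[symmetric, OF assms(1) _ disj]) simp
  finally have G: "(\<Sum>j\<in>I. p1f mu D f eps UNIV j) = measure_pmf.prob mu (\<Union>j\<in>I. ?G j)" .
  have W: "(\<Sum>j\<in>J. qf mu D f eps UNIV j) = measure_pmf.prob mu (\<Union>j\<in>J. ?W j)"
    unfolding qf_def
    by (rule measure_pmf.finite_measure_finite_Union[symmetric, OF assms(2) _ disj]) simp
  have "measure_pmf.prob mu (\<Union>j\<in>I. ?G j) + measure_pmf.prob mu (\<Union>j\<in>J. ?W j)
      = measure_pmf.prob mu ((\<Union>j\<in>I. ?G j) \<union> (\<Union>j\<in>J. ?W j))"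
    by (rule measure_pmf.finite_measure_Union[symmetric]) (auto simp: Gamma_def)
  also have "\<dots> \<le> 1" by simp
  finally show ?thesis unfolding G W .
qed

lemma sum_lessThan_zero_power_exp:
  "(\<Sum>i<j. (0::real) ^ i * exp (real i * x)) = (if j = 0 then 0 else 1)"
  by (induction j) auto

lemma sum_atLeast0_zero_power_mult:
  "(\<Sum>j=0..n. c j * (0::real) ^ j * g j) = c 0 * g 0"
  by (induction n) auto

lemma Qfun_at_0:
  "Qfun mu D f eps A \<xi> 0 = 1 - exp \<xi> * (1 - Qfun mu D f eps A 0 0)"
  unfolding Qfun_def Let_def sum_lessThan_zero_power_exp sum_atLeast0_zero_power_mult
  by (simp add: algebra_simps sum_distrib_left)

lemma Qfun_at_1:
  "Qfun mu D f eps A \<xi> 1 =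
     1 - exp \<xi> * (\<Sum>j=0..a_idx mu D f eps A. p2f mu D f eps A j * exp (real j * \<xi>))"
  by (simp add: Qfun_def Let_def)

lemma one_minus_Qfun_UNIV_at_0:
  "1 - Qfun mu D f eps UNIV 0 0 =
     (\<Sum>j=0..a_idx mu D f eps UNIV. p1f mu D f eps UNIV j) +
     (\<Sum>j=1..max (a_idx mu D f eps UNIV) (b_idx mu D f eps UNIV). qf mu D f eps UNIV j)"
  unfolding Qfun_def Let_def sum_lessThan_zero_power_exp
  by (simp add: p2f_UNIV sum.atLeast_Suc_atMost[of 0])

lemma xi_crit_at_0:
  "xi_crit mu D f eps A 0 = (THE \<xi>. 0 < \<xi> \<and> exp \<xi> * (1 - Qfun mu D f eps A 0 0) = 1)"
proof -
  have "Qfun mu D f eps A \<xi> 0 = 0 \<longleftrightarrow> exp \<xi> * (1 - Qfun mu D f eps A 0 0) = 1" for \<xi>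
    by (subst Qfun_at_0) linarith
  then show ?thesis unfolding xi_crit_def by simp
qed

lemma xi_crit_at_1:
  assumes "X3 D f eps A = {}"
  shows "xi_crit mu D f eps A 1 =
    (THE \<xi>. 0 < \<xi> \<and>
      exp \<xi> * (\<Sum>j=0..a_idx mu D f eps A. p2f mu D f eps A j * exp (real j * \<xi>)) = 1)"
  unfolding xi_crit_def Qfun_at_1 using assms by simp

lemma qf_UNIV_0_le_Qfun_UNIV: "qf mu D f eps UNIV 0 \<le> Qfun mu D f eps UNIV 0 0"
proof -
  let ?a = "a_idx mu D f eps UNIV"
  let ?m = "max (a_idx mu D f eps UNIV) (b_idx mu D f eps UNIV)"
  have "(\<Sum>j=0..?a. p1f mu D f eps UNIV j) + (\<Sum>j=0..?m. qf mu D f eps UNIV j) \<le> 1"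
    by (rule sum_p1f_qf_UNIV_le_one) simp_all
  moreover have "(\<Sum>j=0..?m. qf mu D f eps UNIV j)
      = qf mu D f eps UNIV 0 + (\<Sum>j=1..?m. qf mu D f eps UNIV j)"
    by (simp add: sum.atLeast_Suc_atMost)
  ultimately show ?thesis
    using one_minus_Qfun_UNIV_at_0[of mu D f eps] by linarith
qed

lemma sum_p2f_le_one_minus_Qfun_UNIV:
  assumes "- A \<subseteq> Fixset D"
  shows "(\<Sum>j=0..a_idx mu D f eps A. p2f mu D f eps A j) \<le> 1 - Qfun mu D f eps UNIV 0 0"
proof -
  let ?m = "max (a_idx mu D f eps UNIV) (b_idx mu D f eps UNIV)"
  have "(\<Sum>j=0..a_idx mu D f eps A. p2f mu D f eps A j)
      \<le> (\<Sum>j=0..a_idx mu D f eps UNIV. p1f mu D f eps UNIV j)"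
    unfolding a_idx_eq_UNIV[OF assms] p1f_UNIV_eq_add[OF assms]
    by (intro sum_mono) (simp add: p1f_def)
  also have "\<dots> \<le> \<dots> + (\<Sum>j=1..?m. qf mu D f eps UNIV j)"
    by (simp add: qf_def sum_nonneg)
  finally show ?thesis unfolding one_minus_Qfun_UNIV_at_0 .
qed

theorem theorem2:
  fixes f :: "'a::finite \<Rightarrow> real" and mu :: "'a pmf" and N :: "'a \<Rightarrow> 'a set"
    and D :: "'a \<Rightarrow> 'a" and eps :: real
  assumes fmin: "Min (range f) = 0"
    and Dchoice: "\<forall>x. D x \<in> N x \<and> (\<forall>y\<in>N x. f (D x) \<le> f y)"
    and eps_val: "eps \<in> range f"
    and eps_lt: "eps < Max (range f)"
    and hyp: "(\<Sum>j=0..a_idx mu D f eps (- Fixset D).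
                 p2f mu D f eps (- Fixset D) j /
                 (1 - qf mu D f eps (- Fixset D) 0) ^ (j + 1)) \<ge> 1"
  shows "(SUP p\<in>{0..<1}. ereal (xi_crit mu D f eps UNIV p))
           \<ge> ereal (xi_crit mu D f eps (- Fixset D) 1)"
proof -
  let ?A = "- Fixset D"
  have "xi_crit mu D f eps ?A 1 \<le> xi_crit mu D f eps UNIV 0"
    unfolding xi_crit_at_1[OF X3_compl_Fixset] xi_crit_at_0
  proof (rule exp_poly_root_le_log_root)
    show "0 \<le> p2f mu D f eps ?A j" for j
      by (simp add: p2f_def)
    show "(\<Sum>j=0..a_idx mu D f eps ?A. p2f mu D f eps ?A j) \<le> 1 - Qfun mu D f eps UNIV 0 0"
      by (rule sum_p2f_le_one_minus_Qfun_UNIV) simp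
    show "1 - Qfun mu D f eps UNIV 0 0 \<le> 1 - qf mu D f eps ?A 0"
      using qf_UNIV_0_le_Qfun_UNIV qf_eq_UNIV[of ?A] by simp
    show "0 \<le> qf mu D f eps ?A 0"
      by (simp add: qf_def)
  qed (rule hyp)
  then show ?thesis
    by (intro SUP_upper2[of 0]) auto
qed

end
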